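(* Let $P_1,Q_1\in\mathcal{PP}(k)$ and $P_2,Q_2\in\mathcal{PP}(l)$. The following conditions are equivalent: (1) $P_1P_2\leq Q_1Q_2$; (2) $P_1\triangleleft P_2\leq Q_1\triangleleft Q_2$; (3) $P_1\leq Q_1$ and $P_2\leq Q_2$.
   Context: A plane poset is a finite set with two partial orders $\leq_h,\leq_r$ such that two distinct elements are $\leq_h$-comparable iff they are not $\leq_r$-comparable; $\mathcal{PP}(n)$ is the set of isomorphism classes of plane posets with $n$ elements. On a plane poset, $x\leq y$ iff ($x\leq_h y$ or $x\leq_r y$) is a total order (known fact). For $P,Q\in\mathcal{PP}(n)$, $\theta_{P,Q}$ is the increasing bijection $P\to Q$, and $P\leq Q$ means: for all $x,y\in P$, $\theta_{P,Q}(x)\leq_h\theta_{P,Q}(y)$ in $Q$ implies $x\leq_h y$ in $P$. For plane posets $P,Q$: $PQ$ is the plane poset on $P\sqcup Q$ in which $P,Q$ are plane subposets, no element of $P$ is $\leq_h$-comparable with an element of $Q$, and $x<_r y$ for all $x\in P,y\in Q$; $P\triangleleft Q$ is the plane poset on $P\sqcup Q$ in which $P,Q$ are plane subposets, no element of $P$ is $\leq_r$-comparable with an element of $Q$, and $x<_h y$ for all $x\in P,y\in Q$. *)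

theory Defs
  imports Main
begin

text \<open>A plane poset with elements of type 'a is a triple (A, h, r): a finite carrier A
  and two relations h (the order \<le>h) and r (the order \<le>r) on A.\<close>

type_synonym 'a pp = "'a set \<times> ('a \<Rightarrow> 'a \<Rightarrow> bool) \<times> ('a \<Rightarrow> 'a \<Rightarrow> bool)"

definition pp_set :: "'a pp \<Rightarrow> 'a set" where "pp_set P = fst P"
definition pp_h :: "'a pp \<Rightarrow> 'a \<Rightarrow> 'a \<Rightarrow> bool" where "pp_h P = fst (snd P)"
definition pp_r :: "'a pp \<Rightarrow> 'a \<Rightarrow> 'a \<Rightarrow> bool" where "pp_r P = snd (snd P)"

definition partial_order_on_set :: "'a set \<Rightarrow> ('a \<Rightarrow> 'a \<Rightarrow> bool) \<Rightarrow> bool" where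
  "partial_order_on_set A R \<longleftrightarrow>
     (\<forall>x y. R x y \<longrightarrow> x \<in> A \<and> y \<in> A) \<and>
     (\<forall>x\<in>A. R x x) \<and>
     (\<forall>x\<in>A. \<forall>y\<in>A. R x y \<and> R y x \<longrightarrow> x = y) \<and>
     (\<forall>x\<in>A. \<forall>y\<in>A. \<forall>z\<in>A. R x y \<and> R y z \<longrightarrow> R x z)"

definition plane_poset :: "'a pp \<Rightarrow> bool" where
  "plane_poset P \<longleftrightarrow> finite (pp_set P) \<and>
     partial_order_on_set (pp_set P) (pp_h P) \<and>
     partial_order_on_set (pp_set P) (pp_r P) \<and>
     (\<forall>x\<in>pp_set P. \<forall>y\<in>pp_set P. x \<noteq> y \<longrightarrow>
        ((pp_h P x y \<or> pp_h P y x) \<longleftrightarrow> \<not> (pp_r P x y \<or> pp_r P y x)))"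

definition pp_tle :: "'a pp \<Rightarrow> 'a \<Rightarrow> 'a \<Rightarrow> bool" where
  "pp_tle P x y \<longleftrightarrow> pp_h P x y \<or> pp_r P x y"

definition incr_bij :: "'a pp \<Rightarrow> 'b pp \<Rightarrow> ('a \<Rightarrow> 'b) \<Rightarrow> bool" where
  "incr_bij P Q f \<longleftrightarrow> bij_betw f (pp_set P) (pp_set Q) \<and>
     (\<forall>x\<in>pp_set P. \<forall>y\<in>pp_set P. pp_tle P x y \<longrightarrow> pp_tle Q (f x) (f y))"

text \<open>P \<le> Q: for all x, y in P, \<theta>(x) \<le>h \<theta>(y) in Q implies x \<le>h y in P,
  where \<theta> is the (unique) increasing bijection P \<rightarrow> Q.\<close>
definition pp_le :: "'a pp \<Rightarrow> 'b pp \<Rightarrow> bool" where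
  "pp_le P Q \<longleftrightarrow> (\<forall>\<theta>. incr_bij P Q \<theta> \<longrightarrow>
     (\<forall>x\<in>pp_set P. \<forall>y\<in>pp_set P. pp_h Q (\<theta> x) (\<theta> y) \<longrightarrow> pp_h P x y))"

definition pp_prod :: "'a pp \<Rightarrow> 'b pp \<Rightarrow> ('a + 'b) pp" where
  "pp_prod P Q =
    (Inl ` pp_set P \<union> Inr ` pp_set Q,
     (\<lambda>u v. case (u, v) of
        (Inl x, Inl y) \<Rightarrow> pp_h P x y
      | (Inr x, Inr y) \<Rightarrow> pp_h Q x y
      | _ \<Rightarrow> False),
     (\<lambda>u v. case (u, v) of
        (Inl x, Inl y) \<Rightarrow> pp_r P x y
      | (Inr x, Inr y) \<Rightarrow> pp_r Q x y
      | (Inl x, Inr y) \<Rightarrow> x \<in> pp_set P \<and> y \<in> pp_set Q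
      | (Inr x, Inl y) \<Rightarrow> False))"

definition pp_tri :: "'a pp \<Rightarrow> 'b pp \<Rightarrow> ('a + 'b) pp" where
  "pp_tri P Q =
    (Inl ` pp_set P \<union> Inr ` pp_set Q,
     (\<lambda>u v. case (u, v) of
        (Inl x, Inl y) \<Rightarrow> pp_h P x y
      | (Inr x, Inr y) \<Rightarrow> pp_h Q x y
      | (Inl x, Inr y) \<Rightarrow> x \<in> pp_set P \<and> y \<in> pp_set Q
      | (Inr x, Inl y) \<Rightarrow> False),
     (\<lambda>u v. case (u, v) of
        (Inl x, Inl y) \<Rightarrow> pp_r P x y
      | (Inr x, Inr y) \<Rightarrow> pp_r Q x y
      | _ \<Rightarrow> False))"

end

theory Submission
  imports Defs
begin

text \<open>For a plane poset, \<open>\<le>\<^sub>h \<union> \<le>\<^sub>r\<close> is a linear order, and both products \<open>PQ\<close> and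
  \<open>P \<triangleleft> Q\<close> carry the same linear order: the ordinal sum of those of \<open>P\<close> and \<open>Q\<close>.
  An increasing bijection between finite linear orders of equal size exists and is unique
  (it preserves ranks), so \<open>P \<le> Q\<close> may be tested on a single increasing bijection \<open>\<theta>\<close>. For
  the products take \<open>\<theta> = \<theta>\<^sub>1 + \<theta>\<^sub>2\<close>: on pairs inside one factor the condition is that of
  the factor, and on mixed pairs it holds vacuously, since in \<open>Q\<^sub>1Q\<^sub>2\<close> no mixed pair is
  \<open>\<le>\<^sub>h\<close>-related, while in \<open>P\<^sub>1 \<triangleleft> P\<^sub>2\<close> every pair from \<open>P\<^sub>1 \<times> P\<^sub>2\<close> is.\<close>

definition linear_order_on_set :: "'a set \<Rightarrow> ('a \<Rightarrow> 'a \<Rightarrow> bool) \<Rightarrow> bool" where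
  "linear_order_on_set A R \<longleftrightarrow> partial_order_on_set A R \<and> (\<forall>x\<in>A. \<forall>y\<in>A. R x y \<or> R y x)"

lemma linear_order_on_setD:
  assumes "linear_order_on_set A R"
  shows linear_order_on_set_field: "R x y \<Longrightarrow> x \<in> A \<and> y \<in> A"
    and linear_order_on_set_refl: "x \<in> A \<Longrightarrow> R x x"
    and linear_order_on_set_antisym: "R x y \<Longrightarrow> R y x \<Longrightarrow> x = y"
    and linear_order_on_set_trans: "R x y \<Longrightarrow> R y z \<Longrightarrow> R x z"
    and linear_order_on_set_total: "x \<in> A \<Longrightarrow> y \<in> A \<Longrightarrow> R x y \<or> R y x"
  using assms unfolding linear_order_on_set_def partial_order_on_set_def by blast+

definition rank :: "'a set \<Rightarrow> ('a \<Rightarrow> 'a \<Rightarrow> bool) \<Rightarrow> 'a \<Rightarrow> nat" where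
  "rank A R x = card {y \<in> A. R y x}"

lemma rank_le_iff:
  assumes "finite A" "linear_order_on_set A R" "x \<in> A" "y \<in> A"
  shows "rank A R x \<le> rank A R y \<longleftrightarrow> R x y"
proof
  assume "R x y"
  then have "{z \<in> A. R z x} \<subseteq> {z \<in> A. R z y}"
    using linear_order_on_set_trans[OF assms(2)] by blast
  then show "rank A R x \<le> rank A R y"
    unfolding rank_def using assms(1) by (simp add: card_mono)
next
  assume le: "rank A R x \<le> rank A R y"
  show "R x y"
  proof (rule ccontr)
    assume "\<not> R x y"
    then have "R y x" "x \<noteq> y"
      using linear_order_on_set_refl[OF assms(2)] linear_order_on_set_total[OF assms(2)] assms(3,4)
      by blast+
    then have "{z \<in> A. R z y} \<subset> {z \<in> A. R z x}"
      using \<open>\<not> R x y\<close> linear_order_on_set_refl[OF assms(2)] linear_order_on_set_trans[OF assms(2)]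
        assms(3)
      by blast
    then have "rank A R y < rank A R x"
      unfolding rank_def using assms(1) by (simp add: psubset_card_mono)
    with le show False by simp
  qed
qed

lemma rank_inj_on:
  assumes "finite A" "linear_order_on_set A R"
  shows "inj_on (rank A R) A"
proof (rule inj_onI)
  fix x y assume "x \<in> A" "y \<in> A" "rank A R x = rank A R y"
  then have "R x y" "R y x"
    using rank_le_iff[OF assms] by (metis order_refl)+
  then show "x = y" by (rule linear_order_on_set_antisym[OF assms(2)])
qed

lemma rank_bij_betw:
  assumes "finite A" "linear_order_on_set A R"
  shows "bij_betw (rank A R) A {1..card A}"
proof -
  have "rank A R x \<in> {1..card A}" if "x \<in> A" for x
  proof -
    have "x \<in> {y \<in> A. R y x}"
      using that linear_order_on_set_refl[OF assms(2)] by blast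
    then have "0 < rank A R x"
      unfolding rank_def using assms(1) card_gt_0_iff by fastforce
    moreover have "rank A R x \<le> card A"
      unfolding rank_def using assms(1) by (simp add: card_mono)
    ultimately show ?thesis by simp
  qed
  then have "rank A R ` A \<subseteq> {1..card A}" by blast
  moreover have "card (rank A R ` A) = card {1..card A}"
    using rank_inj_on[OF assms] by (simp add: card_image)
  ultimately show ?thesis
    using rank_inj_on[OF assms] unfolding bij_betw_def by (simp add: card_subset_eq)
qed

definition mono_bij_betw ::
    "('a \<Rightarrow> 'b) \<Rightarrow> 'a set \<Rightarrow> ('a \<Rightarrow> 'a \<Rightarrow> bool) \<Rightarrow> 'b set \<Rightarrow> ('b \<Rightarrow> 'b \<Rightarrow> bool) \<Rightarrow> bool" where
  "mono_bij_betw f A R B S \<longleftrightarrow> bij_betw f A B \<and> (\<forall>x\<in>A. \<forall>y\<in>A. R x y \<longrightarrow> S (f x) (f y))"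

lemma rank_mono_bij_betw:
  assumes "finite A" "linear_order_on_set A R" "linear_order_on_set B S"
    and f: "mono_bij_betw f A R B S" and "x \<in> A"
  shows "rank B S (f x) = rank A R x"
proof -
  have bij: "bij_betw f A B" and mono: "\<And>y z. y \<in> A \<Longrightarrow> z \<in> A \<Longrightarrow> R y z \<Longrightarrow> S (f y) (f z)"
    using f unfolding mono_bij_betw_def by blast+
  have reflect: "R y x" if "y \<in> A" "S (f y) (f x)" for y
  proof (rule ccontr)
    assume "\<not> R y x"
    then have "R x y" "x \<noteq> y"
      using linear_order_on_set_refl[OF assms(2)] linear_order_on_set_total[OF assms(2)]
        that(1) \<open>x \<in> A\<close>
      by blast+
    moreover have "f x = f y"
      using linear_order_on_set_antisym[OF assms(3)] mono[OF \<open>x \<in> A\<close> that(1)] that(2) \<open>R x y\<close>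
      by blast
    ultimately show False
      using bij_betw_imp_inj_on[OF bij] that(1) \<open>x \<in> A\<close> by (auto dest: inj_onD)
  qed
  have "{z \<in> B. S z (f x)} = f ` {y \<in> A. R y x}"
    using bij_betw_imp_surj_on[OF bij] reflect mono \<open>x \<in> A\<close> by blast
  moreover have "inj_on f {y \<in> A. R y x}"
    using bij_betw_imp_inj_on[OF bij] by (rule inj_on_subset) blast
  ultimately show ?thesis
    unfolding rank_def by (simp add: card_image)
qed

lemma mono_bij_betw_unique:
  assumes "finite A" "linear_order_on_set A R" "linear_order_on_set B S"
    and "mono_bij_betw f A R B S" "mono_bij_betw g A R B S" "x \<in> A"
  shows "f x = g x"
proof -
  have "bij_betw f A B" "bij_betw g A B"
    using assms(4,5) unfolding mono_bij_betw_def by blast+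
  then have "finite B" "f x \<in> B" "g x \<in> B"
    using assms(1,6) bij_betw_finite bij_betwE by blast+
  moreover have "rank B S (f x) = rank B S (g x)"
    using rank_mono_bij_betw[OF assms(1-4,6)] rank_mono_bij_betw[OF assms(1-3,5,6)] by simp
  ultimately show ?thesis
    using rank_inj_on[OF _ assms(3)] by (auto dest: inj_onD)
qed

lemma mono_bij_betw_exists:
  assumes "finite A" "linear_order_on_set A R" "finite B" "linear_order_on_set B S"
    and "card A = card B"
  obtains f where "mono_bij_betw f A R B S"
proof
  let ?g = "the_inv_into B (rank B S)"
  have rank_A: "bij_betw (rank A R) A {1..card B}" and rank_B: "bij_betw (rank B S) B {1..card B}"
    using rank_bij_betw[OF assms(1,2)] rank_bij_betw[OF assms(3,4)] assms(5) by simp_all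
  have rank_g: "rank B S (?g n) = n" if "n \<in> {1..card B}" for n
    using f_the_inv_into_f_bij_betw[OF rank_B] that by blast
  have "bij_betw (?g \<circ> rank A R) A B"
    using rank_A bij_betw_the_inv_into[OF rank_B] by (rule bij_betw_trans)
  moreover have "S (?g (rank A R x)) (?g (rank A R y))" if "x \<in> A" "y \<in> A" "R x y" for x y
  proof -
    have "?g (rank A R x) \<in> B" "?g (rank A R y) \<in> B"
      using \<open>bij_betw (?g \<circ> rank A R) A B\<close> that(1,2) bij_betwE by fastforce+
    moreover have "rank B S (?g (rank A R x)) \<le> rank B S (?g (rank A R y))"
      using rank_le_iff[OF assms(1,2) that(1,2)] rank_g bij_betwE[OF rank_A] that by simp
    ultimately show ?thesis
      using rank_le_iff[OF assms(3,4)] by blast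
  qed
  ultimately show "mono_bij_betw (?g \<circ> rank A R) A R B S"
    unfolding mono_bij_betw_def by simp
qed

definition ordinal_sum ::
    "'a set \<Rightarrow> ('a \<Rightarrow> 'a \<Rightarrow> bool) \<Rightarrow> 'b set \<Rightarrow> ('b \<Rightarrow> 'b \<Rightarrow> bool) \<Rightarrow> 'a + 'b \<Rightarrow> 'a + 'b \<Rightarrow> bool" where
  "ordinal_sum A R B S u v =
     (case (u, v) of
        (Inl x, Inl y) \<Rightarrow> R x y
      | (Inr x, Inr y) \<Rightarrow> S x y
      | (Inl x, Inr y) \<Rightarrow> x \<in> A \<and> y \<in> B
      | (Inr x, Inl y) \<Rightarrow> False)"

lemma ordinal_sum_simps [simp]:
  "ordinal_sum A R B S (Inl x) (Inl x') \<longleftrightarrow> R x x'"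
  "ordinal_sum A R B S (Inr y) (Inr y') \<longleftrightarrow> S y y'"
  "ordinal_sum A R B S (Inl x) (Inr y) \<longleftrightarrow> x \<in> A \<and> y \<in> B"
  "\<not> ordinal_sum A R B S (Inr y) (Inl x)"
  by (simp_all add: ordinal_sum_def)

lemma linear_order_on_set_ordinal_sum:
  assumes R: "linear_order_on_set A R" and S: "linear_order_on_set B S"
  shows "linear_order_on_set (A <+> B) (ordinal_sum A R B S)"
  unfolding linear_order_on_set_def partial_order_on_set_def
proof (intro conjI allI ballI impI)
  fix u v assume "ordinal_sum A R B S u v"
  then show "u \<in> A <+> B" "v \<in> A <+> B"
    using linear_order_on_set_field[OF R] linear_order_on_set_field[OF S]
    by (cases u; cases v; auto)+
next
  fix u assume "u \<in> A <+> B"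
  then show "ordinal_sum A R B S u u"
    using linear_order_on_set_refl[OF R] linear_order_on_set_refl[OF S] by auto
next
  fix u v assume "ordinal_sum A R B S u v \<and> ordinal_sum A R B S v u"
  then show "u = v"
    using linear_order_on_set_antisym[OF R] linear_order_on_set_antisym[OF S]
    by (cases u; cases v) auto
next
  fix u v w assume "ordinal_sum A R B S u v \<and> ordinal_sum A R B S v w"
  then show "ordinal_sum A R B S u w"
    by (cases u; cases v; cases w)
      (auto dest: linear_order_on_set_field[OF R] linear_order_on_set_field[OF S]
        intro: linear_order_on_set_trans[OF R] linear_order_on_set_trans[OF S])
next
  fix u v assume "u \<in> A <+> B" "v \<in> A <+> B"
  then show "ordinal_sum A R B S u v \<or> ordinal_sum A R B S v u"
    using linear_order_on_set_total[OF R] linear_order_on_set_total[OF S] by (auto; metis)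
qed

lemma Ball_Plus_iff: "(\<forall>u\<in>A <+> B. P u) \<longleftrightarrow> (\<forall>x\<in>A. P (Inl x)) \<and> (\<forall>y\<in>B. P (Inr y))"
  by blast

lemma bij_betw_map_sum:
  assumes "bij_betw f A C" "bij_betw g B D"
  shows "bij_betw (map_sum f g) (A <+> B) (C <+> D)"
proof -
  have "inj_on (map_sum f g) (A <+> B)"
  proof (rule inj_onI)
    fix u v assume "u \<in> A <+> B" "v \<in> A <+> B" "map_sum f g u = map_sum f g v"
    then show "u = v"
      using bij_betw_imp_inj_on[OF assms(1)] bij_betw_imp_inj_on[OF assms(2)]
      by (cases u; cases v) (auto dest: inj_onD)
  qed
  moreover have "map_sum f g ` (A <+> B) = f ` A <+> g ` B"
    by (simp add: Plus_def image_Un image_image)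
  ultimately show ?thesis
    using assms by (simp add: bij_betw_def)
qed

lemma mono_bij_betw_map_sum:
  assumes "mono_bij_betw f A R C T" "mono_bij_betw g B S D U"
  shows "mono_bij_betw (map_sum f g) (A <+> B) (ordinal_sum A R B S) (C <+> D) (ordinal_sum C T D U)"
proof -
  have f: "bij_betw f A C" "\<And>x y. x \<in> A \<Longrightarrow> y \<in> A \<Longrightarrow> R x y \<Longrightarrow> T (f x) (f y)"
    and g: "bij_betw g B D" "\<And>x y. x \<in> B \<Longrightarrow> y \<in> B \<Longrightarrow> S x y \<Longrightarrow> U (g x) (g y)"
    using assms unfolding mono_bij_betw_def by blast+
  have "ordinal_sum C T D U (map_sum f g u) (map_sum f g v)"
    if "u \<in> A <+> B" "v \<in> A <+> B" "ordinal_sum A R B S u v" for u v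
    using that f(2) g(2) bij_betwE[OF f(1)] bij_betwE[OF g(1)] by (cases u; cases v) auto
  then show ?thesis
    unfolding mono_bij_betw_def using bij_betw_map_sum[OF f(1) g(1)] by blast
qed

lemma pp_set_pp_prod: "pp_set (pp_prod P Q) = pp_set P <+> pp_set Q"
  by (simp add: pp_set_def pp_prod_def Plus_def)

lemma pp_set_pp_tri: "pp_set (pp_tri P Q) = pp_set P <+> pp_set Q"
  by (simp add: pp_set_def pp_tri_def Plus_def)

lemma linear_order_on_set_pp_tle:
  assumes "plane_poset P"
  shows "linear_order_on_set (pp_set P) (pp_tle P)"
proof -
  let ?A = "pp_set P" and ?h = "pp_h P" and ?r = "pp_r P"
  have h: "partial_order_on_set ?A ?h" and r: "partial_order_on_set ?A ?r"
    and plane: "\<And>x y. x \<in> ?A \<Longrightarrow> y \<in> ?A \<Longrightarrow> x \<noteq> y \<Longrightarrow>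
                  (?h x y \<or> ?h y x) \<longleftrightarrow> \<not> (?r x y \<or> ?r y x)"
    using assms unfolding plane_poset_def by blast+
  have carrier: "x \<in> ?A" "y \<in> ?A" if "pp_tle P x y" for x y
    using that h r unfolding pp_tle_def partial_order_on_set_def by blast+
  have h_trans: "?h x z" if "?h x y" "?h y z" for x y z
    using that h unfolding partial_order_on_set_def by blast
  have r_trans: "?r x z" if "?r x y" "?r y z" for x y z
    using that r unfolding partial_order_on_set_def by blast
  have h_refl: "?h x x" if "x \<in> ?A" for x
    using that h unfolding partial_order_on_set_def by blast
  have refl: "pp_tle P x x" if "x \<in> ?A" for x
    using h_refl[OF that] unfolding pp_tle_def ..
  have h_antisym: "x = y" if "?h x y" "?h y x" for x y
    using that h unfolding partial_order_on_set_def by blast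
  have r_antisym: "x = y" if "?r x y" "?r y x" for x y
    using that r unfolding partial_order_on_set_def by blast
  have not_both: "\<not> ((?h x y \<or> ?h y x) \<and> (?r x y \<or> ?r y x))"
    if "x \<in> ?A" "y \<in> ?A" "x \<noteq> y" for x y
    using plane[OF that] by blast
  have trans: "pp_tle P x z" if xy: "pp_tle P x y" and yz: "pp_tle P y z" for x y z
  proof (cases "x = y \<or> y = z \<or> x = z")
    case True
    with xy yz carrier refl show ?thesis by blast
  next
    case False
    have A: "x \<in> ?A" "y \<in> ?A" "z \<in> ?A" using carrier xy yz by blast+
    have "?h x z \<or> ?h z x \<or> ?r x z \<or> ?r z x" using plane[of x z] A False by blast
    \<comment> \<open>\<open>z\<close> below \<open>x\<close> in either order would make \<open>x, y\<close> or \<open>y, z\<close> comparable in both orders\<close>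
    then show ?thesis
      using xy yz h_trans[of z x y] h_trans[of y z x] r_trans[of z x y] r_trans[of y z x]
        h_trans[of x y z] r_trans[of x y z] not_both[of x y] not_both[of y z] A False
      unfolding pp_tle_def by blast
  qed
  show ?thesis
    unfolding linear_order_on_set_def partial_order_on_set_def
  proof (intro conjI allI ballI impI)
    fix x y assume "x \<in> ?A" "y \<in> ?A" "pp_tle P x y \<and> pp_tle P y x"
    then show "x = y"
      using h_antisym[of x y] r_antisym[of x y] not_both[of x y] unfolding pp_tle_def by blast
  next
    fix x y assume "x \<in> ?A" "y \<in> ?A"
    then show "pp_tle P x y \<or> pp_tle P y x"
      using plane[of x y] h_refl[of x] unfolding pp_tle_def by (cases "x = y") auto
  qed (use carrier trans refl in \<open>blast+\<close>)
qed

lemma pp_h_pp_prod [simp]: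
  "pp_h (pp_prod P Q) (Inl x) (Inl x') \<longleftrightarrow> pp_h P x x'"
  "pp_h (pp_prod P Q) (Inr y) (Inr y') \<longleftrightarrow> pp_h Q y y'"
  "\<not> pp_h (pp_prod P Q) (Inl x) (Inr y)"
  "\<not> pp_h (pp_prod P Q) (Inr y) (Inl x)"
  by (simp_all add: pp_h_def pp_prod_def)

lemma pp_h_pp_tri [simp]:
  "pp_h (pp_tri P Q) (Inl x) (Inl x') \<longleftrightarrow> pp_h P x x'"
  "pp_h (pp_tri P Q) (Inr y) (Inr y') \<longleftrightarrow> pp_h Q y y'"
  "pp_h (pp_tri P Q) (Inl x) (Inr y) \<longleftrightarrow> x \<in> pp_set P \<and> y \<in> pp_set Q"
  "\<not> pp_h (pp_tri P Q) (Inr y) (Inl x)"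
  by (simp_all add: pp_h_def pp_tri_def)

lemma pp_tle_pp_prod: "pp_tle (pp_prod P Q) = ordinal_sum (pp_set P) (pp_tle P) (pp_set Q) (pp_tle Q)"
  by (intro ext, rename_tac u v, case_tac u; case_tac v)
     (simp_all add: pp_tle_def pp_prod_def pp_h_def pp_r_def)

lemma pp_tle_pp_tri: "pp_tle (pp_tri P Q) = ordinal_sum (pp_set P) (pp_tle P) (pp_set Q) (pp_tle Q)"
  by (intro ext, rename_tac u v, case_tac u; case_tac v)
     (simp_all add: pp_tle_def pp_tri_def pp_h_def pp_r_def)

lemma incr_bij_iff_mono_bij_betw:
  "incr_bij P Q f \<longleftrightarrow> mono_bij_betw f (pp_set P) (pp_tle P) (pp_set Q) (pp_tle Q)"
  by (simp add: incr_bij_def mono_bij_betw_def)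

lemma pp_le_iff_incr_bij:
  assumes "finite (pp_set P)"
    and "linear_order_on_set (pp_set P) (pp_tle P)" "linear_order_on_set (pp_set Q) (pp_tle Q)"
    and "incr_bij P Q \<theta>"
  shows "pp_le P Q \<longleftrightarrow> (\<forall>x\<in>pp_set P. \<forall>y\<in>pp_set P. pp_h Q (\<theta> x) (\<theta> y) \<longrightarrow> pp_h P x y)"
proof -
  have "\<theta>' x = \<theta> x" if "incr_bij P Q \<theta>'" "x \<in> pp_set P" for \<theta>' x
    using mono_bij_betw_unique[OF assms(1-3) _ _ that(2)] that(1) assms(4)
    unfolding incr_bij_iff_mono_bij_betw .
  then show ?thesis
    unfolding pp_le_def using assms(4) by (metis (no_types, lifting))
qed

lemma exists_incr_bij:
  assumes "plane_poset P" "plane_poset Q" "card (pp_set P) = card (pp_set Q)"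
  obtains \<theta> where "incr_bij P Q \<theta>"
proof -
  have "finite (pp_set P)" "finite (pp_set Q)"
    using assms(1,2) unfolding plane_poset_def by blast+
  then show ?thesis
    using mono_bij_betw_exists linear_order_on_set_pp_tle[OF assms(1)]
      linear_order_on_set_pp_tle[OF assms(2)] assms(3) that
    unfolding incr_bij_iff_mono_bij_betw by metis
qed

lemma pp_le_pp_prod_pp_tri_iff:
  assumes "plane_poset P1" "plane_poset Q1" "plane_poset P2" "plane_poset Q2"
    and "card (pp_set P1) = card (pp_set Q1)" "card (pp_set P2) = card (pp_set Q2)"
  shows pp_le_pp_prod_iff: "pp_le (pp_prod P1 P2) (pp_prod Q1 Q2) \<longleftrightarrow> pp_le P1 Q1 \<and> pp_le P2 Q2"
    and pp_le_pp_tri_iff: "pp_le (pp_tri P1 P2) (pp_tri Q1 Q2) \<longleftrightarrow> pp_le P1 Q1 \<and> pp_le P2 Q2"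
proof -
  obtain \<theta>1 where \<theta>1: "incr_bij P1 Q1 \<theta>1"
    using exists_incr_bij[OF assms(1,2,5)] .
  obtain \<theta>2 where \<theta>2: "incr_bij P2 Q2 \<theta>2"
    using exists_incr_bij[OF assms(3,4,6)] .
  have fin: "finite (pp_set P1)" "finite (pp_set P2)"
    using assms(1,3) unfolding plane_poset_def by blast+
  note lin = linear_order_on_set_pp_tle[OF assms(1)] linear_order_on_set_pp_tle[OF assms(2)]
    linear_order_on_set_pp_tle[OF assms(3)] linear_order_on_set_pp_tle[OF assms(4)]
  note factors = pp_le_iff_incr_bij[OF fin(1) lin(1,2) \<theta>1] pp_le_iff_incr_bij[OF fin(2) lin(3,4) \<theta>2]
  have \<theta>_mono: "mono_bij_betw (map_sum \<theta>1 \<theta>2)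
      (pp_set P1 <+> pp_set P2) (ordinal_sum (pp_set P1) (pp_tle P1) (pp_set P2) (pp_tle P2))
      (pp_set Q1 <+> pp_set Q2) (ordinal_sum (pp_set Q1) (pp_tle Q1) (pp_set Q2) (pp_tle Q2))"
    using mono_bij_betw_map_sum \<theta>1 \<theta>2 unfolding incr_bij_iff_mono_bij_betw by blast
  have "pp_le (pp_prod P1 P2) (pp_prod Q1 Q2) \<longleftrightarrow>
      (\<forall>u\<in>pp_set (pp_prod P1 P2). \<forall>v\<in>pp_set (pp_prod P1 P2).
         pp_h (pp_prod Q1 Q2) (map_sum \<theta>1 \<theta>2 u) (map_sum \<theta>1 \<theta>2 v) \<longrightarrow> pp_h (pp_prod P1 P2) u v)"
    by (rule pp_le_iff_incr_bij)
      (simp_all add: incr_bij_iff_mono_bij_betw pp_set_pp_prod pp_tle_pp_prod \<theta>_mono fin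
        linear_order_on_set_ordinal_sum lin)
  also have "\<dots> \<longleftrightarrow> pp_le P1 Q1 \<and> pp_le P2 Q2"
    using factors by (simp add: pp_set_pp_prod Ball_Plus_iff)
  finally show "pp_le (pp_prod P1 P2) (pp_prod Q1 Q2) \<longleftrightarrow> pp_le P1 Q1 \<and> pp_le P2 Q2" .
  have "pp_le (pp_tri P1 P2) (pp_tri Q1 Q2) \<longleftrightarrow>
      (\<forall>u\<in>pp_set (pp_tri P1 P2). \<forall>v\<in>pp_set (pp_tri P1 P2).
         pp_h (pp_tri Q1 Q2) (map_sum \<theta>1 \<theta>2 u) (map_sum \<theta>1 \<theta>2 v) \<longrightarrow> pp_h (pp_tri P1 P2) u v)"
    by (rule pp_le_iff_incr_bij)
      (simp_all add: incr_bij_iff_mono_bij_betw pp_set_pp_tri pp_tle_pp_tri \<theta>_mono fin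
        linear_order_on_set_ordinal_sum lin)
  also have "\<dots> \<longleftrightarrow> pp_le P1 Q1 \<and> pp_le P2 Q2"
    using factors by (simp add: pp_set_pp_tri Ball_Plus_iff)
  finally show "pp_le (pp_tri P1 P2) (pp_tri Q1 Q2) \<longleftrightarrow> pp_le P1 Q1 \<and> pp_le P2 Q2" .
qed

theorem proposition16:
  fixes P1 :: "'a pp" and Q1 :: "'c pp" and P2 :: "'b pp" and Q2 :: "'d pp"
    and k l :: nat
  assumes "plane_poset P1" and "plane_poset Q1"
    and "plane_poset P2" and "plane_poset Q2"
    and "card (pp_set P1) = k" and "card (pp_set Q1) = k"
    and "card (pp_set P2) = l" and "card (pp_set Q2) = l"
  shows "(pp_le (pp_prod P1 P2) (pp_prod Q1 Q2) \<longleftrightarrow> pp_le (pp_tri P1 P2) (pp_tri Q1 Q2))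
       \<and> (pp_le (pp_tri P1 P2) (pp_tri Q1 Q2) \<longleftrightarrow> pp_le P1 Q1 \<and> pp_le P2 Q2)"
  using pp_le_pp_prod_iff[OF assms(1-4)] pp_le_pp_tri_iff[OF assms(1-4)] assms(5-8) by simp

end
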